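(* Let $c>0$ and $\gamma>0$, and define the hybrid ordinary-Cauchy (HOC) function $l_{\gamma,c}:\mathbb{R}\to\mathbb{R}$ by $$l_{\gamma,c}(x)=\begin{cases} x^2/2, & |x|\le c,\\ \frac{\gamma^2+c^2}{2}\ln\!\big(1+(x/\gamma)^2\big)+b, & |x|>c,\end{cases}\qquad b=\frac{c^2}{2}-\frac{\gamma^2+c^2}{2}\ln\!\big(1+(c/\gamma)^2\big).$$ Define the (extended-real-valued) implicit regularizer $\varphi_{\gamma,c}(y)=\sup_{t\in\mathbb{R}}\big[l_{\gamma,c}(t)-\tfrac{(t-y)^2}{2}\big]$. Then for every $x\in\mathbb{R}$, $$l_{\gamma,c}(x)=\min_{y\in\mathbb{R}}\ \frac{(x-y)^2}{2}+\varphi_{\gamma,c}(y),$$ and this minimum is attained uniquely at $$y^\star=\max\Big\{0,\ |x|-\frac{(\gamma^2+c^2)|x|}{\gamma^2+x^2}\Big\}\cdot\operatorname{sign}(x).$$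
   Context: $\operatorname{sign}(x)$ denotes the sign of $x$ (with $\operatorname{sign}(0)=0$). *)

theory Defs
  imports Complex_Main "HOL-Library.Extended_Real"
begin

definition hoc_b :: "real \<Rightarrow> real \<Rightarrow> real" where
  "hoc_b \<gamma> c = c^2 / 2 - (\<gamma>^2 + c^2) / 2 * ln (1 + (c / \<gamma>)^2)"

definition hoc :: "real \<Rightarrow> real \<Rightarrow> real \<Rightarrow> real" where
  "hoc \<gamma> c x = (if \<bar>x\<bar> \<le> c then x^2 / 2
     else (\<gamma>^2 + c^2) / 2 * ln (1 + (x / \<gamma>)^2) + hoc_b \<gamma> c)"

definition hoc_phi :: "real \<Rightarrow> real \<Rightarrow> real \<Rightarrow> ereal" where
  "hoc_phi \<gamma> c y = (SUP t::real. ereal (hoc \<gamma> c t - (t - y)^2 / 2))"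

end

theory Submission
  imports Defs "HOL-Analysis.Derivative"
begin

text \<open>Put \<open>h(t) = t\<^sup>2/2 - l(t)\<close>. Expanding the square,
\<open>l(t) - (t - y)\<^sup>2/2 = t y - y\<^sup>2/2 - h(t)\<close>, so \<open>\<phi>(y) + y\<^sup>2/2\<close> is the convex conjugate
\<open>h\<^sup>*(y)\<close>, and the claim \<open>l(x) \<le> (x - y)\<^sup>2/2 + \<phi>(y)\<close> with equality exactly at \<open>y\<^sup>\<star>\<close> is
the Fenchel-Young inequality \<open>h(x) + h\<^sup>*(y) \<ge> x y\<close> with its equality case \<open>y = h'(x)\<close>.
This needs \<open>h\<close> convex and differentiable. It vanishes on \<open>[-c, c]\<close>; the constant \<open>b\<close>
makes its outer branch vanish at \<open>\<plusminus>c\<close> too, and the derivative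
\<open>s (s\<^sup>2 - c\<^sup>2)/(\<gamma>\<^sup>2 + s\<^sup>2)\<close> of that branch also vanishes there. So \<open>h'\<close> is continuous,
odd and nondecreasing, and \<open>h'(x)\<close> is exactly \<open>y\<^sup>\<star>\<close>.\<close>

lemma odd_mono_on_nonneg_imp_mono:
  fixes f :: "real \<Rightarrow> real"
  assumes odd: "\<And>x. f (- x) = - f x" and mono: "mono_on {0..} f"
  shows "mono f"
proof (rule monoI)
  fix s t :: real assume st: "s \<le> t"
  have f0: "f 0 = 0" using odd[of 0] by simp
  have mono': "f u \<le> f v" if "0 \<le> u" "u \<le> v" for u v
    using mono that by (auto simp: mono_on_def)
  consider "0 \<le> s" | "t \<le> 0" | "s < 0" "0 < t" by linarith
  then show "f s \<le> f t"
  proof cases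
    case 1 then show ?thesis using mono' st by blast
  next
    case 2 then show ?thesis using mono'[of "- t" "- s"] st odd[of s] odd[of t] by simp
  next
    case 3 then show ?thesis using mono'[of 0 "- s"] mono'[of 0 t] odd[of s] f0 by simp
  qed
qed

lemma non_tangent_line_not_supporting:
  fixes f :: "real \<Rightarrow> real"
  assumes deriv: "(f has_real_derivative d) (at x)" and slope: "y \<noteq> d"
  shows "\<exists>t. f t < f x + y * (t - x)"
proof (rule ccontr)
  assume "\<nexists>t. f t < f x + y * (t - x)"
  then have "f x - y * x \<le> f t - y * t" for t by (auto simp: not_less algebra_simps)
  moreover have "((\<lambda>t. f t - y * t) has_real_derivative d - y) (at x)"
    using deriv by (auto intro!: derivative_eq_intros)
  ultimately have "d - y = 0" by (intro DERIV_local_min[where d = 1]) auto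
  with slope show False by simp
qed

definition hoc_gap :: "real \<Rightarrow> real \<Rightarrow> real \<Rightarrow> real" where
  "hoc_gap \<gamma> c t = t^2 / 2 - hoc \<gamma> c t"

definition hoc_tail_gap :: "real \<Rightarrow> real \<Rightarrow> real \<Rightarrow> real" where
  "hoc_tail_gap \<gamma> c s = s^2 / 2 - (\<gamma>^2 + c^2) / 2 * ln (1 + (s / \<gamma>)^2) - hoc_b \<gamma> c"

definition hoc_shrink :: "real \<Rightarrow> real \<Rightarrow> real \<Rightarrow> real" where
  "hoc_shrink \<gamma> c s = (if \<bar>s\<bar> \<le> c then 0 else s * (s^2 - c^2) / (\<gamma>^2 + s^2))"

lemma hoc_gap_eq: "hoc_gap \<gamma> c t = (if \<bar>t\<bar> \<le> c then 0 else hoc_tail_gap \<gamma> c t)"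
  by (simp add: hoc_gap_def hoc_def hoc_tail_gap_def)

lemma hoc_tail_gap_eq_0: "\<bar>s\<bar> = c \<Longrightarrow> hoc_tail_gap \<gamma> c s = 0"
  by (auto simp: hoc_tail_gap_def hoc_b_def abs_if split: if_splits)

lemma has_real_derivative_hoc_tail_gap:
  assumes "\<gamma> > 0"
  shows "(hoc_tail_gap \<gamma> c has_real_derivative s * (s^2 - c^2) / (\<gamma>^2 + s^2)) (at s)"
proof -
  have pos: "\<gamma>^2 + s^2 > 0" using assms by (simp add: add_pos_nonneg)
  have "1 + (s / \<gamma>)^2 = (\<gamma>^2 + s^2) / \<gamma>^2"
    using assms by (simp add: power_divide add_divide_distrib)
  then have "2 * s / 2 - (\<gamma>^2 + c^2) / 2 * (2 * (s / \<gamma>) * (1 / \<gamma>) / (1 + (s / \<gamma>)^2))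
      = s * (s^2 - c^2) / (\<gamma>^2 + s^2)"
    using assms pos by (simp add: divide_simps) (simp add: algebra_simps power2_eq_square)
  moreover have "(hoc_tail_gap \<gamma> c has_real_derivative
      2 * s / 2 - (\<gamma>^2 + c^2) / 2 * (2 * (s / \<gamma>) * (1 / \<gamma>) / (1 + (s / \<gamma>)^2))) (at s)"
    unfolding hoc_tail_gap_def[abs_def] using assms
    by (auto intro!: derivative_eq_intros simp: add_pos_nonneg mult_ac) (simp add: divide_simps algebra_simps)
  ultimately show ?thesis by simp
qed

lemma has_real_derivative_hoc_gap:
  assumes "c > 0" "\<gamma> > 0"
  shows "(hoc_gap \<gamma> c has_real_derivative hoc_shrink \<gamma> c x) (at x)"
proof -
  define S where "S = {t::real. \<bar>t\<bar> \<le> c}"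
  define T where "T = {t::real. c \<le> \<bar>t\<bar>}"
  define d where "d = x * (x^2 - c^2) / (\<gamma>^2 + x^2)"
  have closure: "closure S = S" "closure T = T"
    unfolding S_def T_def by (auto intro!: closure_closed closed_Collect_le continuous_intros)
  have ST: "S \<union> T = UNIV" "S \<union> (closure S \<inter> closure T) = S" "T \<union> (closure S \<inter> closure T) = T"
    unfolding closure by (auto simp: S_def T_def)
  have "((\<lambda>t. if t \<in> S then 0 else hoc_tail_gap \<gamma> c t) has_derivative
      (if x \<in> S then (\<lambda>h. 0) else (\<lambda>h. d * h))) (at x within (S \<union> T))"
  proof (rule has_derivative_If_within_closures)
    show "(hoc_tail_gap \<gamma> c has_derivative (\<lambda>h. d * h)) (at x within T \<union> (closure S \<inter> closure T))"
      using has_field_derivative_at_within[OF has_real_derivative_hoc_tail_gap[OF assms(2)]]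
      unfolding has_field_derivative_def d_def .
    show "0 = hoc_tail_gap \<gamma> c x" if "x \<in> closure S" "x \<in> closure T"
      using that unfolding closure by (simp add: S_def T_def hoc_tail_gap_eq_0)
    show "(\<lambda>h. 0) = (\<lambda>h. d * h)" if "x \<in> closure S" "x \<in> closure T"
      using that unfolding closure by (simp add: S_def T_def d_def)
  qed (use ST in auto)
  moreover have "(\<lambda>t. if t \<in> S then 0 else hoc_tail_gap \<gamma> c t) = hoc_gap \<gamma> c"
    by (auto simp: S_def hoc_gap_eq)
  moreover have "(if x \<in> S then (\<lambda>h. 0) else (\<lambda>h. d * h)) = (*) (hoc_shrink \<gamma> c x)"
    by (auto simp: S_def d_def hoc_shrink_def)
  ultimately show ?thesis
    using ST(1) by (simp add: has_field_derivative_def)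
qed

lemma hoc_tail_slope_mono:
  fixes \<gamma> c s t :: real
  assumes "0 \<le> c" "0 < \<gamma>" "c \<le> s" "s \<le> t"
  shows "s * (s^2 - c^2) / (\<gamma>^2 + s^2) \<le> t * (t^2 - c^2) / (\<gamma>^2 + t^2)"
proof -
  define P where "P = (\<gamma>^2 + s^2) * (\<gamma>^2 + t^2)"
  have pos: "\<gamma>^2 + s^2 > 0" "\<gamma>^2 + t^2 > 0" using assms by (simp_all add: add_pos_nonneg)
  have "c * c \<le> s * t" using assms by (intro mult_mono) auto
  then have "(\<gamma>^2 + c^2) * (\<gamma>^2 - s * t) \<le> (\<gamma>^2 + c^2) * (\<gamma>^2 - c * c)"
    by (intro mult_left_mono) auto
  also have "\<dots> \<le> P"
    using zero_le_power2[of "\<gamma> * s"] zero_le_power2[of "\<gamma> * t"] zero_le_power2[of "s * t"]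
      zero_le_power2[of "c * c"]
    unfolding P_def by (simp add: algebra_simps power2_eq_square)
  finally have "0 \<le> P + (\<gamma>^2 + c^2) * (s * t - \<gamma>^2)"
    by (simp add: algebra_simps)
  moreover have "0 < P" unfolding P_def using pos by simp
  ultimately have "0 \<le> (t - s) * (P + (\<gamma>^2 + c^2) * (s * t - \<gamma>^2)) / P"
    using assms by simp
  also have "\<dots> = t * (t^2 - c^2) / (\<gamma>^2 + t^2) - s * (s^2 - c^2) / (\<gamma>^2 + s^2)"
    unfolding P_def using pos assms(2) by (simp add: divide_simps) (simp add: algebra_simps power2_eq_square)
  finally show ?thesis by simp
qed

lemma hoc_shrink_minus: "hoc_shrink \<gamma> c (- s) = - hoc_shrink \<gamma> c s"
  by (simp add: hoc_shrink_def)

lemma mono_hoc_shrink: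
  assumes "0 < c" "0 < \<gamma>"
  shows "mono (hoc_shrink \<gamma> c)"
proof (rule odd_mono_on_nonneg_imp_mono[where f = "hoc_shrink \<gamma> c", OF hoc_shrink_minus], rule mono_onI)
  fix s t :: real assume "s \<in> {0..}" "t \<in> {0..}" "s \<le> t"
  moreover have "0 \<le> hoc_shrink \<gamma> c t" if "c < t"
    using hoc_tail_slope_mono[of c \<gamma> c t] assms that by (simp add: hoc_shrink_def)
  ultimately show "hoc_shrink \<gamma> c s \<le> hoc_shrink \<gamma> c t"
    using hoc_tail_slope_mono[of c \<gamma> s t] assms by (auto simp: hoc_shrink_def)
qed

lemma convex_on_hoc_gap:
  assumes "0 < c" "0 < \<gamma>"
  shows "convex_on UNIV (hoc_gap \<gamma> c)"
  using has_real_derivative_hoc_gap[OF assms] mono_hoc_shrink[OF assms]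
  by (intro convex_on_realI[where f' = "hoc_shrink \<gamma> c"]) (auto simp: mono_def)

lemma hoc_objective_eq: "hoc \<gamma> c t - (t - y)^2 / 2 = t * y - y^2 / 2 - hoc_gap \<gamma> c t"
  by (simp add: hoc_gap_def power2_eq_square field_simps)

lemma hoc_phi_at_shrink:
  assumes "0 < c" "0 < \<gamma>"
  shows "hoc_phi \<gamma> c (hoc_shrink \<gamma> c x) = ereal (hoc \<gamma> c x - (x - hoc_shrink \<gamma> c x)^2 / 2)"
proof -
  let ?y = "hoc_shrink \<gamma> c x"
  have "hoc_gap \<gamma> c t - hoc_gap \<gamma> c x \<ge> ?y * (t - x)" for t
    using has_real_derivative_hoc_gap[OF assms]
    by (intro convex_on_imp_above_tangent[OF convex_on_hoc_gap[OF assms]]) auto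
  then have "hoc \<gamma> c t - (t - ?y)^2 / 2 \<le> hoc \<gamma> c x - (x - ?y)^2 / 2" for t
    unfolding hoc_objective_eq by (simp add: algebra_simps)
  then show ?thesis
    unfolding hoc_phi_def by (intro antisym SUP_least SUP_upper2[of x]) auto
qed

lemma hoc_phi_gt_off_shrink:
  assumes "0 < c" "0 < \<gamma>" "y \<noteq> hoc_shrink \<gamma> c x"
  shows "ereal (hoc \<gamma> c x - (x - y)^2 / 2) < hoc_phi \<gamma> c y"
proof -
  obtain t where "hoc_gap \<gamma> c t < hoc_gap \<gamma> c x + y * (t - x)"
    using non_tangent_line_not_supporting[OF has_real_derivative_hoc_gap[OF assms(1,2)] assms(3)]
    by blast
  then have "ereal (hoc \<gamma> c x - (x - y)^2 / 2) < ereal (hoc \<gamma> c t - (t - y)^2 / 2)"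
    unfolding hoc_objective_eq by (simp add: algebra_simps)
  also have "\<dots> \<le> hoc_phi \<gamma> c y"
    unfolding hoc_phi_def by (rule SUP_upper) simp
  finally show ?thesis .
qed

lemma hoc_shrink_eq_max:
  assumes "0 < c" "0 < \<gamma>"
  shows "hoc_shrink \<gamma> c x = max 0 (\<bar>x\<bar> - (\<gamma>^2 + c^2) * \<bar>x\<bar> / (\<gamma>^2 + x^2)) * sgn x"
proof -
  have pos: "\<gamma>^2 + x^2 > 0" using assms by (simp add: add_pos_nonneg)
  have "\<bar>x\<bar> - (\<gamma>^2 + c^2) * \<bar>x\<bar> / (\<gamma>^2 + x^2) = \<bar>x\<bar> * (x^2 - c^2) / (\<gamma>^2 + x^2)"
    using pos by (simp add: divide_simps) (simp add: algebra_simps)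
  moreover have "x^2 \<le> c^2 \<longleftrightarrow> \<bar>x\<bar> \<le> c"
    using assms by (metis abs_le_square_iff abs_of_pos)
  ultimately show ?thesis
    using pos by (auto simp: hoc_shrink_def sgn_if zero_le_divide_iff zero_le_mult_iff max_def)
qed

theorem mainTheorem2:
  fixes \<gamma> c x :: real
  assumes "c > 0" and "\<gamma> > 0"
  defines "ystar \<equiv> max 0 (\<bar>x\<bar> - (\<gamma>^2 + c^2) * \<bar>x\<bar> / (\<gamma>^2 + x^2)) * sgn x"
  shows "ereal (hoc \<gamma> c x) = ereal ((x - ystar)^2 / 2) + hoc_phi \<gamma> c ystar
     \<and> (\<forall>y. y \<noteq> ystar \<longrightarrow> ereal (hoc \<gamma> c x) < ereal ((x - y)^2 / 2) + hoc_phi \<gamma> c y)"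
proof (intro conjI allI impI)
  have ystar: "ystar = hoc_shrink \<gamma> c x"
    unfolding ystar_def using hoc_shrink_eq_max[OF assms(1,2)] by simp
  have split: "ereal (hoc \<gamma> c x) = ereal ((x - y)^2 / 2) + ereal (hoc \<gamma> c x - (x - y)^2 / 2)" for y
    by simp
  show "ereal (hoc \<gamma> c x) = ereal ((x - ystar)^2 / 2) + hoc_phi \<gamma> c ystar"
    unfolding ystar hoc_phi_at_shrink[OF assms(1,2)] by (rule split)
  fix y assume "y \<noteq> ystar"
  then have "ereal (hoc \<gamma> c x - (x - y)^2 / 2) < hoc_phi \<gamma> c y"
    using hoc_phi_gt_off_shrink[OF assms(1,2)] ystar by blast
  then show "ereal (hoc \<gamma> c x) < ereal ((x - y)^2 / 2) + hoc_phi \<gamma> c y"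
    unfolding split[of y] by (intro ereal_less_add) simp_all
qed

end
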